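(* Let $g\ge0$, $n\ge1$. Let $Ch_1,Ch_2\in\mathbf{K}$ be two chambers and $\mathcal{A}\in Ch_1$, $\mathcal{B}\in Ch_2$ weight data. If $Ch_1\le Ch_2$, then the category $\mathcal{G}_{g,\mathcal{A}}$ is a full subcategory of $\mathcal{G}_{g,\mathcal{B}}$.
   Context: A weight datum is $\mathcal{A}=(a_1,\dots,a_n)$ with $a_i\in\mathbb{Q}\cap(0,1]$ and $2g-2+\sum_i a_i>0$; $\mathcal{D}_{g,n}\subset\mathbb{R}^n$ is the set of weight data. For $S\subseteq\{1,\dots,n\}$ with $2\le|S|\le n$ if $g\ge1$ (resp. $2\le|S|\le n-2$ if $g=0$), the wall $w_S$ is the locus $\sum_{i\in S}a_i=1$. The chambers are the connected components of the complement in $\mathcal{D}_{g,n}$ of all walls; each is determined by the direction ($<1$ or $>1$) of $\sum_{i\in S}a_i$ for each such $S$. $\mathbf{K}$ is the set of chambers, partially ordered by $Ch_1\le Ch_2$ iff for every such $S$, $\sum_{i\in S}a_i>1$ on $Ch_1$ implies $\sum_{i\in S}b_i>1$ on $Ch_2$. A $(g,\mathcal{A})$-stable graph is a finite connected graph $G$ (loops and multiple edges allowed) with vertex weight $w:V(G)\to\mathbb{Z}_{\ge0}$ and $n$ legs labelled $1,\dots,n$ attached via $m:\{1,\dots,n\}\to V(G)$, with $b_1(G)+\sum_v w(v)=g$ and $2w(v)-2+|v|_E+|v|_{\mathcal{A}}>0$ for every vertex $v$, where $|v|_E$ is the number of edge half-edges at $v$ (loops counted twice) and $|v|_{\mathcal{A}}=\sum_{m(i)=v}a_i$.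 $\mathcal{G}_{g,\mathcal{A}}$ is the category whose objects are $(g,\mathcal{A})$-stable graphs and whose morphisms are compositions of isomorphisms of weighted marked graphs and weighted edge contractions. *)

theory Defs
  imports Complex_Main "HOL-Library.FuncSet"
begin

text \<open>A weight datum with n entries is a function a :: nat => rat, of which only the
values a 1, ..., a n are relevant.\<close>

definition weight_datum :: "nat \<Rightarrow> nat \<Rightarrow> (nat \<Rightarrow> rat) \<Rightarrow> bool" where
  "weight_datum g n a \<longleftrightarrow>
     (\<forall>i\<in>{1..n}. 0 < a i \<and> a i \<le> 1) \<and> 2 * of_nat g - 2 + (\<Sum>i\<in>{1..n}. a i) > 0"

definition admissible :: "nat \<Rightarrow> nat \<Rightarrow> nat set \<Rightarrow> bool" where
  "admissible g n S \<longleftrightarrow> S \<subseteq> {1..n} \<and> 2 \<le> card S \<and>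
     (if g = 0 then card S + 2 \<le> n else card S \<le> n)"

definition off_walls :: "nat \<Rightarrow> nat \<Rightarrow> (nat \<Rightarrow> rat) \<Rightarrow> bool" where
  "off_walls g n a \<longleftrightarrow> (\<forall>S. admissible g n S \<longrightarrow> sum a S \<noteq> 1)"

definition chamber_of :: "nat \<Rightarrow> nat \<Rightarrow> (nat \<Rightarrow> rat) \<Rightarrow> (nat \<Rightarrow> rat) set" where
  "chamber_of g n a = {b. weight_datum g n b \<and> off_walls g n b \<and>
       (\<forall>S. admissible g n S \<longrightarrow> (sum b S > 1 \<longleftrightarrow> sum a S > 1))}"

definition chambers :: "nat \<Rightarrow> nat \<Rightarrow> (nat \<Rightarrow> rat) set set" where
  "chambers g n = {chamber_of g n a | a. weight_datum g n a \<and> off_walls g n a}"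

definition chamber_le :: "nat \<Rightarrow> nat \<Rightarrow> (nat \<Rightarrow> rat) set \<Rightarrow> (nat \<Rightarrow> rat) set \<Rightarrow> bool" where
  "chamber_le g n C1 C2 \<longleftrightarrow>
     (\<forall>S. admissible g n S \<longrightarrow> (\<forall>a\<in>C1. sum a S > 1) \<longrightarrow> (\<forall>b\<in>C2. sum b S > 1))"

text \<open>Edges are abstract (multiple edges allowed); ends e gives the two endpoints
(a loop has equal endpoints). leg i is the vertex carrying leg i (1 <= i <= n).\<close>
record ('v, 'e) sgraph =
  verts :: "'v set"
  edges :: "'e set"
  ends :: "'e \<Rightarrow> 'v \<times> 'v"
  vweight :: "'v \<Rightarrow> nat"
  leg :: "nat \<Rightarrow> 'v"

definition adj :: "('v, 'e) sgraph \<Rightarrow> ('v \<times> 'v) set" where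
  "adj G = {(fst (ends G e), snd (ends G e)) | e. e \<in> edges G}
         \<union> {(snd (ends G e), fst (ends G e)) | e. e \<in> edges G}"

definition graph_connected :: "('v, 'e) sgraph \<Rightarrow> bool" where
  "graph_connected G \<longleftrightarrow> verts G \<noteq> {} \<and> (\<forall>u\<in>verts G. \<forall>v\<in>verts G. (u, v) \<in> (adj G)\<^sup>*)"

definition is_graph :: "nat \<Rightarrow> ('v, 'e) sgraph \<Rightarrow> bool" where
  "is_graph n G \<longleftrightarrow> finite (verts G) \<and> finite (edges G) \<and>
     (\<forall>e\<in>edges G. fst (ends G e) \<in> verts G \<and> snd (ends G e) \<in> verts G) \<and>
     (\<forall>i\<in>{1..n}. leg G i \<in> verts G) \<and> graph_connected G"

text \<open>b_1(G) + sum of vertex weights (for a connected graph b_1 = |E| - |V| + 1).\<close>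
definition genus :: "('v, 'e) sgraph \<Rightarrow> int" where
  "genus G = int (card (edges G)) - int (card (verts G)) + 1 + (\<Sum>v\<in>verts G. int (vweight G v))"

text \<open>Number of edge half-edges at v, loops counted twice.\<close>
definition valence :: "('v, 'e) sgraph \<Rightarrow> 'v \<Rightarrow> nat" where
  "valence G v = card {e\<in>edges G. fst (ends G e) = v} + card {e\<in>edges G. snd (ends G e) = v}"

definition legweight :: "nat \<Rightarrow> (nat \<Rightarrow> rat) \<Rightarrow> ('v, 'e) sgraph \<Rightarrow> 'v \<Rightarrow> rat" where
  "legweight n a G v = (\<Sum>i\<in>{i\<in>{1..n}. leg G i = v}. a i)"

definition stable :: "nat \<Rightarrow> nat \<Rightarrow> (nat \<Rightarrow> rat) \<Rightarrow> ('v, 'e) sgraph \<Rightarrow> bool" where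
  "stable g n a G \<longleftrightarrow> is_graph n G \<and> genus G = int g \<and>
     (\<forall>v\<in>verts G. 2 * of_nat (vweight G v) - 2 + of_nat (valence G v) + legweight n a G v > (0::rat))"

text \<open>A morphism G -> H is a pair (fV, fE): fV maps vertices of G to vertices of H,
fE maps edges of H to (the surviving) edges of G. Both are extensional.\<close>
type_synonym ('v, 'e) gmor = "('v \<Rightarrow> 'v) \<times> ('e \<Rightarrow> 'e)"

definition ends_compat :: "('v, 'e) sgraph \<Rightarrow> ('v, 'e) sgraph \<Rightarrow> ('v, 'e) gmor \<Rightarrow> bool" where
  "ends_compat G H f \<longleftrightarrow> (\<forall>e\<in>edges H.
     ends H e = (fst f (fst (ends G (snd f e))), fst f (snd (ends G (snd f e)))) \<or>
     ends H e = (fst f (snd (ends G (snd f e))), fst f (fst (ends G (snd f e)))))"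

definition is_iso :: "nat \<Rightarrow> ('v, 'e) sgraph \<Rightarrow> ('v, 'e) sgraph \<Rightarrow> ('v, 'e) gmor \<Rightarrow> bool" where
  "is_iso n G H f \<longleftrightarrow>
     fst f \<in> extensional (verts G) \<and> snd f \<in> extensional (edges H) \<and>
     bij_betw (fst f) (verts G) (verts H) \<and> bij_betw (snd f) (edges H) (edges G) \<and>
     ends_compat G H f \<and>
     (\<forall>v\<in>verts G. vweight H (fst f v) = vweight G v) \<and>
     (\<forall>i\<in>{1..n}. leg H i = fst f (leg G i))"

text \<open>Weighted contraction of the single edge e (followed by an identification of the
result with H).\<close>
definition is_contraction ::
  "nat \<Rightarrow> ('v, 'e) sgraph \<Rightarrow> ('v, 'e) sgraph \<Rightarrow> 'e \<Rightarrow> ('v, 'e) gmor \<Rightarrow> bool" where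
  "is_contraction n G H e f \<longleftrightarrow>
     e \<in> edges G \<and>
     fst f \<in> extensional (verts G) \<and> snd f \<in> extensional (edges H) \<and>
     fst f ` verts G = verts H \<and>
     (\<forall>u\<in>verts G. \<forall>v\<in>verts G. fst f u = fst f v \<longleftrightarrow>
         u = v \<or> {u, v} = {fst (ends G e), snd (ends G e)}) \<and>
     bij_betw (snd f) (edges H) (edges G - {e}) \<and>
     ends_compat G H f \<and>
     (\<forall>v\<in>verts G. v \<notin> {fst (ends G e), snd (ends G e)} \<longrightarrow> vweight H (fst f v) = vweight G v) \<and>
     vweight H (fst f (fst (ends G e))) =
       (if fst (ends G e) = snd (ends G e) then vweight G (fst (ends G e)) + 1
        else vweight G (fst (ends G e)) + vweight G (snd (ends G e))) \<and>
     (\<forall>i\<in>{1..n}. leg H i = fst f (leg G i))"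

definition elementary :: "nat \<Rightarrow> ('v, 'e) sgraph \<Rightarrow> ('v, 'e) sgraph \<Rightarrow> ('v, 'e) gmor \<Rightarrow> bool" where
  "elementary n G H f \<longleftrightarrow> is_iso n G H f \<or> (\<exists>e. is_contraction n G H e f)"

text \<open>Composition of f : G -> K and h : K -> H.\<close>
definition mcomp :: "('v, 'e) sgraph \<Rightarrow> ('v, 'e) sgraph \<Rightarrow> ('v, 'e) gmor \<Rightarrow> ('v, 'e) gmor \<Rightarrow> ('v, 'e) gmor" where
  "mcomp G H h f = (compose (verts G) (fst h) (fst f), compose (edges H) (snd f) (snd h))"

text \<open>Morphisms of the category G_{g,A}: compositions of isomorphisms and weighted edge
contractions, all intermediate graphs being (g,A)-stable.\<close>
inductive mor :: "nat \<Rightarrow> nat \<Rightarrow> (nat \<Rightarrow> rat) \<Rightarrow> ('v, 'e) sgraph \<Rightarrow> ('v, 'e) sgraph \<Rightarrow> ('v, 'e) gmor \<Rightarrow> bool"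
  for g n a where
  base: "stable g n a G \<Longrightarrow> stable g n a H \<Longrightarrow> is_iso n G H f \<Longrightarrow> mor g n a G H f"
| step: "mor g n a G K f \<Longrightarrow> stable g n a H \<Longrightarrow> elementary n K H h \<Longrightarrow> mor g n a G H (mcomp G H h f)"

definition objs :: "nat \<Rightarrow> nat \<Rightarrow> (nat \<Rightarrow> rat) \<Rightarrow> ('v, 'e) sgraph set" where
  "objs g n a = {G. stable g n a G}"

definition homs :: "nat \<Rightarrow> nat \<Rightarrow> (nat \<Rightarrow> rat) \<Rightarrow> ('v, 'e) sgraph \<Rightarrow> ('v, 'e) sgraph \<Rightarrow> ('v, 'e) gmor set" where
  "homs g n a G H = {f. mor g n a G H f}"

text \<open>(Obj1, Hom1) is a full subcategory of (Obj2, Hom2) (composition is the same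
operation mcomp in both).\<close>
definition full_subcat :: "'o set \<Rightarrow> ('o \<Rightarrow> 'o \<Rightarrow> 'm set) \<Rightarrow> 'o set \<Rightarrow> ('o \<Rightarrow> 'o \<Rightarrow> 'm set) \<Rightarrow> bool" where
  "full_subcat O1 H1 O2 H2 \<longleftrightarrow> O1 \<subseteq> O2 \<and> (\<forall>X\<in>O1. \<forall>Y\<in>O1. H1 X Y = H2 X Y)"

end

theory Submission
  imports Defs
begin

(* Write the stability condition at a vertex v as k - 2 + |v|_A > 0 with k = 2 w(v) + |v|_E.
   For k >= 3 it always holds, and for k = 2 it says that v carries a leg. For k = 1 it says
   that the legs at v weigh more than 1, which Ch_1 <= Ch_2 transfers from A to B: directly if
   the set of legs is admissible, and otherwise g = 0 and the complement holds at most one leg,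
   while B has total weight > 2. For k = 0 the graph is a single vertex of genus 0 carrying all
   legs, stable for every weight datum. So every (g,A)-stable graph is (g,B)-stable.
   Conversely, the margin 2 w(v) - 2 + |v|_E + |v|_A of a vertex after a contraction is the sum
   of the margins of the vertices mapped to it, so contractions of A-stable graphs stay
   A-stable: a chain of elementary morphisms in G_{g,B} starting at an A-stable graph lies
   entirely in G_{g,A}, and the morphism sets agree. *)

definition end_count :: "('v, 'e) sgraph \<Rightarrow> 'e \<Rightarrow> 'v \<Rightarrow> nat" where
  "end_count G d x = (if fst (ends G d) = x then 1 else 0) + (if snd (ends G d) = x then 1 else 0)"

lemma valence_eq_sum_end_count:
  "finite (edges G) \<Longrightarrow> valence G v = (\<Sum>d\<in>edges G. end_count G d v)"
  unfolding valence_def end_count_def card_eq_sum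
  by (simp only: sum.inter_filter sum.distrib)

lemma legweight_eq_sum: "legweight n a G v = (\<Sum>i\<in>{1..n}. if leg G i = v then a i else 0)"
  unfolding legweight_def by (rule sum.inter_filter) simp

lemma end_count_fibre_sum:
  fixes K H :: "('v, 'e) sgraph" and y :: 'v
  assumes "ends_compat K H f" "e \<in> edges H" "finite (verts K)"
    and "fst (ends K (snd f e)) \<in> verts K" "snd (ends K (snd f e)) \<in> verts K"
  defines "P \<equiv> {x\<in>verts K. fst f x = y}"
  shows "end_count H e y = (\<Sum>x\<in>P. end_count K (snd f e) x)"
proof -
  let ?p = "fst (ends K (snd f e))" and ?q = "snd (ends K (snd f e))"
  have indicator: "(if fst f z = y then 1 else 0) = (\<Sum>x\<in>P. if z = x then 1 else (0::nat))"
    if "z \<in> verts K" for z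
    using assms(3) that by (simp add: sum.delta P_def)
  have "ends H e = (fst f ?p, fst f ?q) \<or> ends H e = (fst f ?q, fst f ?p)"
    using assms(1,2) by (simp add: ends_compat_def)
  then have "end_count H e y = (if fst f ?p = y then 1 else 0) + (if fst f ?q = y then 1 else 0)"
    by (elim disjE) (simp_all add: end_count_def add.commute)
  also have "\<dots> = (\<Sum>x\<in>P. end_count K (snd f e) x)"
    unfolding indicator[OF assms(4)] indicator[OF assms(5)] end_count_def by (simp add: sum.distrib)
  finally show ?thesis .
qed

lemma valence_fibre_sum:
  fixes K H :: "('v, 'e) sgraph" and y :: 'v
  assumes K: "is_graph n K" and bij: "bij_betw (snd f) (edges H) (edges K - D)"
    and D: "D \<subseteq> edges K" and ec: "ends_compat K H f"
  defines "P \<equiv> {x\<in>verts K. fst f x = y}"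
  shows "valence H y + (\<Sum>d\<in>D. \<Sum>x\<in>P. end_count K d x) = (\<Sum>x\<in>P. valence K x)"
proof -
  have finE: "finite (edges K)" and finV: "finite (verts K)" and finP: "finite P"
    and endsK: "\<And>d. d \<in> edges K \<Longrightarrow> fst (ends K d) \<in> verts K \<and> snd (ends K d) \<in> verts K"
    using K by (auto simp: is_graph_def P_def)
  have finH: "finite (edges H)"
    using bij finE bij_betw_finite by blast
  have image: "snd f e \<in> edges K" if "e \<in> edges H" for e
    using bij that by (auto simp: bij_betw_def)
  have "valence H y = (\<Sum>e\<in>edges H. \<Sum>x\<in>P. end_count K (snd f e) x)"
    using end_count_fibre_sum[OF ec _ finV] endsK[OF image]
    by (simp add: valence_eq_sum_end_count[OF finH] P_def)
  also have "\<dots> = (\<Sum>d\<in>edges K - D. \<Sum>x\<in>P. end_count K d x)"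
    using sum.reindex_bij_betw[OF bij] .
  finally have "valence H y + (\<Sum>d\<in>D. \<Sum>x\<in>P. end_count K d x) = (\<Sum>d\<in>edges K. \<Sum>x\<in>P. end_count K d x)"
    using sum.subset_diff[OF D finE, of "\<lambda>d. \<Sum>x\<in>P. end_count K d x"] by simp
  also have "\<dots> = (\<Sum>x\<in>P. valence K x)"
    by (subst sum.swap) (simp add: valence_eq_sum_end_count[OF finE])
  finally show ?thesis .
qed

lemma legweight_fibre_sum:
  fixes K H :: "('v, 'e) sgraph" and y :: 'v
  assumes K: "is_graph n K" and legs: "\<forall>i\<in>{1..n}. leg H i = fst f (leg K i)"
  defines "P \<equiv> {x\<in>verts K. fst f x = y}"
  shows "legweight n a H y = (\<Sum>x\<in>P. legweight n a K x)"
proof -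
  have finP: "finite P" and legsK: "\<forall>i\<in>{1..n}. leg K i \<in> verts K"
    using K by (auto simp: is_graph_def P_def)
  have "(\<Sum>x\<in>P. if leg K i = x then a i else 0) = (if leg H i = y then a i else 0)"
    if "i \<in> {1..n}" for i
    using finP legs legsK that by (simp add: sum.delta P_def)
  then show ?thesis
    unfolding legweight_eq_sum by (subst sum.swap) simp
qed

definition margin :: "nat \<Rightarrow> (nat \<Rightarrow> rat) \<Rightarrow> ('v, 'e) sgraph \<Rightarrow> 'v \<Rightarrow> rat" where
  "margin n a G v = 2 * of_nat (vweight G v) - 2 + of_nat (valence G v) + legweight n a G v"

lemma stable_iff_margin:
  "stable g n a G \<longleftrightarrow> is_graph n G \<and> genus G = int g \<and> (\<forall>v\<in>verts G. 0 < margin n a G v)"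
  by (simp add: stable_def margin_def)

lemma margin_fibre_sum:
  fixes K H :: "('v, 'e) sgraph" and f :: "('v, 'e) gmor" and y :: 'v
  defines "P \<equiv> {x\<in>verts K. fst f x = y}"
  assumes K: "is_graph n K" and bij: "bij_betw (snd f) (edges H) (edges K - D)"
    and D: "D \<subseteq> edges K" and ec: "ends_compat K H f"
    and legs: "\<forall>i\<in>{1..n}. leg H i = fst f (leg K i)"
    \<comment> \<open>The weight of y exceeds that of its fibre by the first Betti number of the contracted
      subgraph over y, which has card P vertices and half of the last sum as edges.\<close>
    and balance: "2 * vweight H y + 2 * card P =
                  2 + 2 * (\<Sum>x\<in>P. vweight K x) + (\<Sum>d\<in>D. \<Sum>x\<in>P. end_count K d x)"
  shows "margin n a H y = (\<Sum>x\<in>P. margin n a K x)"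
proof -
  let ?c = "\<Sum>d\<in>D. \<Sum>x\<in>P. end_count K d x"
  have val: "of_nat (valence H y) + of_nat ?c = (\<Sum>x\<in>P. of_nat (valence K x) :: rat)"
    using arg_cong[OF valence_fibre_sum[OF K bij D ec], of "of_nat :: nat \<Rightarrow> rat"]
    by (simp add: P_def)
  have bal: "2 * of_nat (vweight H y) + 2 * of_nat (card P) =
             2 + 2 * (\<Sum>x\<in>P. of_nat (vweight K x)) + (of_nat ?c :: rat)"
    using arg_cong[OF balance, of "of_nat :: nat \<Rightarrow> rat"] by simp
  have "(\<Sum>x\<in>P. margin n a K x) = 2 * (\<Sum>x\<in>P. of_nat (vweight K x)) - 2 * of_nat (card P)
          + (\<Sum>x\<in>P. of_nat (valence K x)) + (\<Sum>x\<in>P. legweight n a K x)"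
    by (simp add: margin_def sum.distrib sum_subtractf sum_distrib_left)
  then show ?thesis
    using val bal legweight_fibre_sum[OF K legs, of a y] by (simp add: margin_def P_def)
qed

lemma margin_iso:
  assumes iso: "is_iso n K H f" and K: "is_graph n K" and x: "x \<in> verts K"
  shows "margin n a H (fst f x) = margin n a K x"
proof -
  have fibre: "{z\<in>verts K. fst f z = fst f x} = {x}"
    using iso x by (auto simp: is_iso_def bij_betw_def inj_on_def)
  have "margin n a H (fst f x) = (\<Sum>z\<in>{z\<in>verts K. fst f z = fst f x}. margin n a K z)"
    by (rule margin_fibre_sum[where D = "{}"]) (use iso K x in \<open>simp_all add: is_iso_def fibre\<close>)
  then show ?thesis
    by (simp add: fibre)
qed

lemma margin_contraction:
  assumes c: "is_contraction n K H e f" and K: "is_graph n K" and x: "x \<in> verts K"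
  defines "E \<equiv> {fst (ends K e), snd (ends K e)}"
  shows "margin n a H (fst f x) = (if x \<in> E then \<Sum>z\<in>E. margin n a K z else margin n a K x)"
proof -
  let ?p = "fst (ends K e)" and ?q = "snd (ends K e)"
  have e: "e \<in> edges K"
    and merge: "\<forall>u\<in>verts K. \<forall>v\<in>verts K. fst f u = fst f v \<longleftrightarrow> u = v \<or> {u, v} = E"
    and bij: "bij_betw (snd f) (edges H) (edges K - {e})" and ec: "ends_compat K H f"
    and w_other: "\<forall>v\<in>verts K. v \<notin> E \<longrightarrow> vweight H (fst f v) = vweight K v"
    and w_merged: "vweight H (fst f ?p) = (if ?p = ?q then vweight K ?p + 1 else vweight K ?p + vweight K ?q)"
    and legs: "\<forall>i\<in>{1..n}. leg H i = fst f (leg K i)"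
    using c by (auto simp: is_contraction_def E_def)
  have E: "E \<subseteq> verts K"
    using K e by (auto simp: is_graph_def E_def)
  have fibre_sum: "margin n a H (fst f x) = (\<Sum>z\<in>{z\<in>verts K. fst f z = fst f x}. margin n a K z)"
    if "2 * vweight H (fst f x) + 2 * card {z\<in>verts K. fst f z = fst f x} =
        2 + 2 * (\<Sum>z\<in>{z\<in>verts K. fst f z = fst f x}. vweight K z)
          + (\<Sum>z\<in>{z\<in>verts K. fst f z = fst f x}. end_count K e z)"
    using margin_fibre_sum[OF K bij _ ec legs] that e by simp
  show ?thesis
  proof (cases "x \<in> E")
    case True
    then have fibre: "{z\<in>verts K. fst f z = fst f x} = E"
      using merge E x by (auto simp: E_def)
    have "fst f x = fst f ?p"
      using merge E x True by (auto simp: E_def)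
    then have "2 * vweight H (fst f x) + 2 * card E = 2 + 2 * (\<Sum>z\<in>E. vweight K z) + (\<Sum>z\<in>E. end_count K e z)"
      using w_merged by (cases "?p = ?q") (simp_all add: E_def end_count_def)
    then show ?thesis
      using fibre_sum True by (simp add: fibre)
  next
    case False
    then have fibre: "{z\<in>verts K. fst f z = fst f x} = {x}"
      using merge x E by auto
    have "end_count K e x = 0"
      using False by (auto simp: E_def end_count_def)
    then show ?thesis
      using fibre_sum False w_other x by (simp add: fibre)
  qed
qed

lemma elementary_preserves_stable:
  assumes K: "stable g n a K" and el: "elementary n K H h"
    and H: "is_graph n H" "genus H = int g"
  shows "stable g n a H"
proof -
  have gK: "is_graph n K" and pos: "\<And>x. x \<in> verts K \<Longrightarrow> 0 < margin n a K x"
    using K by (auto simp: stable_iff_margin)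
  have "0 < margin n a H y" if y: "y \<in> verts H" for y
  proof (cases "is_iso n K H h")
    case True
    then obtain x where "x \<in> verts K" "y = fst h x"
      using y True by (simp add: is_iso_def bij_betw_def) blast
    then show ?thesis
      using margin_iso[OF True gK] pos by simp
  next
    case False
    then obtain e where c: "is_contraction n K H e h"
      using el by (auto simp: elementary_def)
    then obtain x where x: "x \<in> verts K" "y = fst h x"
      using y c by (simp add: is_contraction_def) blast
    have "{fst (ends K e), snd (ends K e)} \<subseteq> verts K"
      using c gK by (auto simp: is_contraction_def is_graph_def)
    then have "0 < (\<Sum>z\<in>{fst (ends K e), snd (ends K e)}. margin n a K z)"
      using pos by (intro sum_pos) auto
    then show ?thesis
      using margin_contraction[OF c gK x(1)] pos[OF x(1)] x(2) by simp
  qed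
  then show ?thesis
    using H by (simp add: stable_iff_margin)
qed

lemma mor_mono:
  fixes G H :: "('v, 'e) sgraph"
  assumes "mor g n a G H f" and "\<And>K :: ('v, 'e) sgraph. stable g n a K \<Longrightarrow> stable g n b K"
  shows "mor g n b G H f"
  using assms(1)
proof induction
  case (base G H f)
  then show ?case
    by (blast intro: mor.base assms(2))
next
  case (step G K f H h)
  then show ?case
    by (blast intro: mor.step assms(2))
qed

lemma mor_from_stable_source:
  assumes "mor g n b G H f" and "stable g n a G"
  shows "mor g n a G H f \<and> stable g n a H"
  using assms
proof induction
  case (base G H f)
  have "elementary n G H f"
    using base.hyps(3) by (simp add: elementary_def)
  then have "stable g n a H"
    using elementary_preserves_stable[OF base.prems] base.hyps(2) by (simp add: stable_def)
  with base show ?case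
    by (simp add: mor.base)
next
  case (step G K f H h)
  then have "mor g n a G K f" and "stable g n a K"
    by simp_all
  moreover have "stable g n a H"
    using elementary_preserves_stable[OF \<open>stable g n a K\<close> step.hyps(3)] step.hyps(2)
    by (simp add: stable_def)
  ultimately show ?case
    using step.hyps by (simp add: mor.step)
qed

lemma sum_le_one_if_card_le_one:
  fixes c :: "'a \<Rightarrow> 'b :: linordered_semidom"
  assumes "finite T" "card T \<le> 1" "\<And>i. i \<in> T \<Longrightarrow> c i \<le> 1"
  shows "sum c T \<le> 1"
proof -
  have "T = {} \<or> (\<exists>i. T = {i})"
    using assms(1,2) by (metis card_0_eq card_1_singleton_iff le_Suc_eq le_zero_eq One_nat_def)
  then show ?thesis
    using assms(3) by auto
qed

lemma sum_gt_one_on_subsets: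
  fixes a b :: "nat \<Rightarrow> rat"
  assumes a_le: "\<forall>i\<in>{1..n}. a i \<le> 1" and wb: "weight_datum g n b"
    and adm: "\<And>S. admissible g n S \<Longrightarrow> 1 < sum a S \<Longrightarrow> 1 < sum b S"
    and S: "S \<subseteq> {1..n}" and sa: "1 < sum a S"
  shows "1 < sum b S"
proof (cases "admissible g n S")
  case True
  then show ?thesis
    using adm sa by blast
next
  case False
  have finS: "finite S"
    using S finite_subset by blast
  have "\<not> card S \<le> 1"
    using sum_le_one_if_card_le_one[OF finS, of a] a_le S sa by auto
  then have g0: "g = 0" and small_complement: "card ({1..n} - S) \<le> 1"
    using False S card_mono[OF _ S] card_Diff_subset[OF finS S]
    by (auto simp: admissible_def split: if_splits)
  have "sum b ({1..n} - S) \<le> 1"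
    using sum_le_one_if_card_le_one[OF _ small_complement, of b] wb by (auto simp: weight_datum_def)
  moreover have "sum b {1..n} = sum b S + sum b ({1..n} - S)"
    using sum.subset_diff[OF S, of b] by simp
  moreover have "2 < sum b {1..n}"
    using wb g0 by (simp add: weight_datum_def)
  ultimately show ?thesis
    by linarith
qed

lemma isolated_vertex_graph:
  assumes G: "is_graph n G" and v: "v \<in> verts G" and val: "valence G v = 0"
  shows "verts G = {v}" and "edges G = {}"
proof -
  have no_edge_at_v: "fst (ends G d) \<noteq> v \<and> snd (ends G d) \<noteq> v" if "d \<in> edges G" for d
    using G val that by (auto simp: is_graph_def valence_def)
  have "u = v" if u: "u \<in> verts G" for u
  proof -
    have "(v, u) \<in> (adj G)\<^sup>*"
      using G v u by (simp add: is_graph_def graph_connected_def)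
    then show ?thesis
    proof (cases rule: converse_rtranclE)
      case (step z)
      then show ?thesis
        using no_edge_at_v by (force simp: adj_def prod_eq_iff)
    qed simp
  qed
  then show "verts G = {v}"
    using v by blast
  then show "edges G = {}"
    using G no_edge_at_v by (fastforce simp: is_graph_def)
qed

lemma stable_weight_mono:
  fixes a b :: "nat \<Rightarrow> rat"
  assumes wb: "weight_datum g n b"
    and dom: "\<And>S. S \<subseteq> {1..n} \<Longrightarrow> 1 < sum a S \<Longrightarrow> 1 < sum b S"
    and G: "stable g n a G"
  shows "stable g n b G"
proof -
  have gG: "is_graph n G" and gen: "genus G = int g"
    using G by (simp_all add: stable_def)
  have "0 < margin n b G v" if v: "v \<in> verts G" for v
  proof -
    define S where "S = {i\<in>{1..n}. leg G i = v}"
    define k where "k = 2 * vweight G v + valence G v"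
    have S: "S \<subseteq> {1..n}"
      by (auto simp: S_def)
    have margin_v: "margin n c G v = of_nat k - 2 + sum c S" for c
      by (simp add: margin_def legweight_def S_def k_def)
    have "0 < margin n a G v"
      using G v by (simp add: stable_iff_margin)
    then have sa: "0 < of_nat k - 2 + sum a S"
      by (simp add: margin_v)
    have b_pos: "\<And>i. i \<in> S \<Longrightarrow> 0 < b i"
      using wb S by (auto simp: weight_datum_def)
    then have sb: "0 \<le> sum b S"
      by (simp add: less_imp_le sum_nonneg)
    consider "3 \<le> k" | "k = 2" | "k = 1" | "k = 0"
      by linarith
    then show ?thesis
    proof cases
      case 1
      then have "(3::rat) \<le> of_nat k"
        by simp
      then show ?thesis
        using sb margin_v[of b] by linarith
    next
      case 2
      then have "S \<noteq> {}"
        using sa by auto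
      then have "0 < sum b S"
        using b_pos finite_subset[OF S] by (intro sum_pos) auto
      then show ?thesis
        using margin_v[of b] 2 by simp
    next
      case 3
      then show ?thesis
        using sa dom[OF S] margin_v[of b] by simp
    next
      case 4
      then have "vweight G v = 0" and "valence G v = 0"
        unfolding k_def by simp_all
      then have "verts G = {v}" and "edges G = {}"
        using isolated_vertex_graph[OF gG v] by simp_all
      with \<open>vweight G v = 0\<close> have "g = 0"
        using gen by (simp add: genus_def)
      have "\<forall>i\<in>{1..n}. leg G i \<in> verts G"
        using gG by (simp add: is_graph_def)
      then have "S = {1..n}"
        unfolding S_def using \<open>verts G = {v}\<close> by blast
      with \<open>g = 0\<close> show ?thesis
        using wb margin_v[of b] 4 by (simp add: weight_datum_def)
    qed
  qed
  then show ?thesis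
    using gG gen by (simp add: stable_iff_margin)
qed

lemma chamber_weight_datum:
  "C \<in> chambers g n \<Longrightarrow> a \<in> C \<Longrightarrow> weight_datum g n a"
  by (auto simp: chambers_def chamber_of_def)

lemma chamber_le_sum_gt_one:
  assumes C1: "C1 \<in> chambers g n" and a: "a \<in> C1" and b: "b \<in> C2"
    and le: "chamber_le g n C1 C2" and S: "admissible g n S" and sa: "1 < sum a S"
  shows "1 < sum b S"
proof -
  obtain a0 where "C1 = chamber_of g n a0"
    using C1 by (auto simp: chambers_def)
  then have "\<forall>x\<in>C1. 1 < sum x S"
    using a S sa by (simp add: chamber_of_def)
  then show ?thesis
    using le b S by (auto simp: chamber_le_def)
qed

theorem mainTheorem4:
  fixes g n :: nat and C1 C2 :: "(nat \<Rightarrow> rat) set" and a b :: "nat \<Rightarrow> rat"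
  assumes "n \<ge> 1"
    and "C1 \<in> chambers g n" and "C2 \<in> chambers g n"
    and "a \<in> C1" and "b \<in> C2"
    and "chamber_le g n C1 C2"
  shows "full_subcat (objs g n a :: ('v, 'e) sgraph set) (homs g n a) (objs g n b) (homs g n b)"
proof -
  have wa: "weight_datum g n a" and wb: "weight_datum g n b"
    using assms(2-5) chamber_weight_datum by blast+
  have "1 < sum b S" if "admissible g n S" "1 < sum a S" for S
    using chamber_le_sum_gt_one[OF assms(2,4,5,6) that] .
  then have "1 < sum b S" if "S \<subseteq> {1..n}" "1 < sum a S" for S
    using sum_gt_one_on_subsets[OF _ wb _ that] wa by (simp add: weight_datum_def)
  then have stable_b: "stable g n b G" if "stable g n a G" for G :: "('v, 'e) sgraph"
    using stable_weight_mono[OF wb] that by blast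
  have "mor g n a X Y f \<longleftrightarrow> mor g n b X Y f" if "stable g n a X" for X Y :: "('v, 'e) sgraph" and f
    using mor_mono[OF _ stable_b] mor_from_stable_source[OF _ that] by blast
  then show ?thesis
    unfolding full_subcat_def objs_def homs_def using stable_b by auto
qed

end
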